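(* The operator $\frac1\lambda P$ maps $\Delta_f$ into itself.
   Context: Let $I=[0,1)$ carry a metric $d_I$, fix $\theta\in(0,1)$, and let $\Omega=I^{\mathbb Z}$ with metric $d(x,y)=\sup_{k\in\mathbb Z}\theta^{|k|}d_I(x_k,y_k)$. Let $\tau:I\to I$ have full branches, so that $b=\#\tau^{-1}(t)$ is constant; let $p_\tau$ be a fixed point of $\tau$. Assume there is $\eta\in(0,1)$ such that every inverse branch $\zeta$ of $\tau$ satisfies $d_I(\zeta(s),\zeta(t))\le\eta\,d_I(s,t)$. Let $(\bar\tau x)_i=\tau(x_i)$. Let $\pi_k:\Omega\to\Omega$ keep the coordinates $|i|\le k$ and set the others to $p_\tau$; $\Phi_k=\Phi\circ\pi_k$. Fix $\beta\in(0,1]$; $|\Phi|_\infty=\sup|\Phi|$, $|\Phi|_\beta=\sup_{k\in\mathbb N}\sup_{x\neq y}|\Phi_k(x)-\Phi_k(y)|/d(x,y)^\beta$, $\|\Phi\|=|\Phi|_\infty+|\Phi|_\beta$, $\mathcal C=\{\Phi\in C(\Omega):\|\Phi\|<\infty\}$. An inverse branch of order $k$ is a choice $\zeta=(\zeta_j)_{|j|\le k}$ of inverse branches of $\tau$, with $(\zeta_x)_j=\zeta_j(x_j)$ for $|j|\le k$, $(\zeta_x)_j=x_j$ otherwise; $b_k=b^{2k+1}$. For real $f\in\mathcal C$, $P_k\Phi(x)=b_k^{-1}\sum_{|\zeta|=k}e^{f(\pi_k\zeta_x)}\Phi(\pi_k\zeta_x)$ and $P\Phi=\lim_kP_k\Phi$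 pointwise. Fix a Borel probability measure $\nu_0$ on $\Omega$ with $P^*\nu_0=\lambda\nu_0$, where $\lambda=\int P\mathbf 1\,d\nu_0$ (such exists). Put $B(z)=\exp\!\left(|f|_\beta\frac{\eta^\beta}{1-\eta^\beta}z^\beta\right)$ for $z\ge0$ and $\Delta_f=\{\Phi\in C(\Omega):\Phi\ge0,\ \nu_0(\Phi)=1,\ \Phi(x)\le B(d(x,y))\Phi(y)\ \forall x,y\in\Omega\}$. *)

theory Defs
  imports "HOL-Analysis.Analysis" "HOL-Probability.Probability"
begin

definition Iset :: "real set" where
  "Iset = {0..<1}"

definition Omega :: "(int \<Rightarrow> real) set" where
  "Omega = {x. \<forall>i. x i \<in> Iset}"

definition metric_on_I :: "(real \<Rightarrow> real \<Rightarrow> real) \<Rightarrow> bool" where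
  "metric_on_I dI \<longleftrightarrow>
     (\<forall>s\<in>Iset. \<forall>t\<in>Iset. 0 \<le> dI s t \<and> dI s t = dI t s \<and> (dI s t = 0 \<longleftrightarrow> s = t)) \<and>
     (\<forall>s\<in>Iset. \<forall>t\<in>Iset. \<forall>u\<in>Iset. dI s u \<le> dI s t + dI t u)"

definition dOm :: "(real \<Rightarrow> real \<Rightarrow> real) \<Rightarrow> real \<Rightarrow> (int \<Rightarrow> real) \<Rightarrow> (int \<Rightarrow> real) \<Rightarrow> real" where
  "dOm dI \<theta> x y = (if x \<in> Omega \<and> y \<in> Omega then (SUP k. \<theta> ^ nat \<bar>k\<bar> * dI (x k) (y k)) else 0)"

definition Otop :: "(real \<Rightarrow> real \<Rightarrow> real) \<Rightarrow> real \<Rightarrow> (int \<Rightarrow> real) topology" where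
  "Otop dI \<theta> = Metric_space.mtopology Omega (dOm dI \<theta>)"

definition Ccont :: "(real \<Rightarrow> real \<Rightarrow> real) \<Rightarrow> real \<Rightarrow> ((int \<Rightarrow> real) \<Rightarrow> real) set" where
  "Ccont dI \<theta> = {\<Phi>. continuous_map (Otop dI \<theta>) euclideanreal \<Phi>}"

definition proj :: "real \<Rightarrow> nat \<Rightarrow> (int \<Rightarrow> real) \<Rightarrow> (int \<Rightarrow> real)" where
  "proj p k x = (\<lambda>i. if \<bar>i\<bar> \<le> int k then x i else p)"

definition holder_quots ::
  "(real \<Rightarrow> real \<Rightarrow> real) \<Rightarrow> real \<Rightarrow> real \<Rightarrow> real \<Rightarrow> ((int \<Rightarrow> real) \<Rightarrow> real) \<Rightarrow> real set" where
  "holder_quots dI \<theta> p \<beta> \<Phi> =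
     {\<bar>\<Phi> (proj p k x) - \<Phi> (proj p k y)\<bar> / (dOm dI \<theta> x y) powr \<beta> | k x y.
        x \<in> Omega \<and> y \<in> Omega \<and> x \<noteq> y}"

definition holder_semi ::
  "(real \<Rightarrow> real \<Rightarrow> real) \<Rightarrow> real \<Rightarrow> real \<Rightarrow> real \<Rightarrow> ((int \<Rightarrow> real) \<Rightarrow> real) \<Rightarrow> real" where
  "holder_semi dI \<theta> p \<beta> \<Phi> = Sup (holder_quots dI \<theta> p \<beta> \<Phi>)"

definition Cbeta ::
  "(real \<Rightarrow> real \<Rightarrow> real) \<Rightarrow> real \<Rightarrow> real \<Rightarrow> real \<Rightarrow> ((int \<Rightarrow> real) \<Rightarrow> real) set" where
  "Cbeta dI \<theta> p \<beta> = {\<Phi> \<in> Ccont dI \<theta>. (\<exists>M. \<forall>x\<in>Omega. \<bar>\<Phi> x\<bar> \<le> M) \<and>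
                                      bdd_above (holder_quots dI \<theta> p \<beta> \<Phi>)}"

text \<open>Inverse branches of order k: choices c j \<in> {..<b} of an inverse branch for |j| <= k.\<close>
definition branches :: "nat \<Rightarrow> nat \<Rightarrow> (int \<Rightarrow> nat) set" where
  "branches b k = PiE {- int k .. int k} (\<lambda>_. {..<b})"

definition branch_apply ::
  "(nat \<Rightarrow> real \<Rightarrow> real) \<Rightarrow> nat \<Rightarrow> (int \<Rightarrow> nat) \<Rightarrow> (int \<Rightarrow> real) \<Rightarrow> (int \<Rightarrow> real)" where
  "branch_apply \<zeta> k c x = (\<lambda>j. if \<bar>j\<bar> \<le> int k then \<zeta> (c j) (x j) else x j)"

definition Pk ::
  "(nat \<Rightarrow> real \<Rightarrow> real) \<Rightarrow> nat \<Rightarrow> real \<Rightarrow> ((int \<Rightarrow> real) \<Rightarrow> real) \<Rightarrow> nat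
     \<Rightarrow> ((int \<Rightarrow> real) \<Rightarrow> real) \<Rightarrow> (int \<Rightarrow> real) \<Rightarrow> real" where
  "Pk \<zeta> b p f k \<Phi> x =
     (1 / real b ^ (2 * k + 1)) *
     (\<Sum>c\<in>branches b k. exp (f (proj p k (branch_apply \<zeta> k c x))) * \<Phi> (proj p k (branch_apply \<zeta> k c x)))"

definition Pop ::
  "(nat \<Rightarrow> real \<Rightarrow> real) \<Rightarrow> nat \<Rightarrow> real \<Rightarrow> ((int \<Rightarrow> real) \<Rightarrow> real)
     \<Rightarrow> ((int \<Rightarrow> real) \<Rightarrow> real) \<Rightarrow> (int \<Rightarrow> real) \<Rightarrow> real" where
  "Pop \<zeta> b p f \<Phi> x = lim (\<lambda>k. Pk \<zeta> b p f k \<Phi> x)"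

definition Bfun :: "real \<Rightarrow> real \<Rightarrow> real \<Rightarrow> real \<Rightarrow> real" where
  "Bfun fnorm \<eta> \<beta> z = exp (fnorm * (\<eta> powr \<beta> / (1 - \<eta> powr \<beta>)) * z powr \<beta>)"

definition Delta_f ::
  "(real \<Rightarrow> real \<Rightarrow> real) \<Rightarrow> real \<Rightarrow> real \<Rightarrow> real \<Rightarrow> real \<Rightarrow> ((int \<Rightarrow> real) \<Rightarrow> real)
     \<Rightarrow> (int \<Rightarrow> real) measure \<Rightarrow> ((int \<Rightarrow> real) \<Rightarrow> real) set" where
  "Delta_f dI \<theta> p \<beta> \<eta> f \<nu>0 =
     {\<Phi> \<in> Ccont dI \<theta>. (\<forall>x\<in>Omega. 0 \<le> \<Phi> x) \<and> integral\<^sup>L \<nu>0 \<Phi> = 1 \<and>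
        (\<forall>x\<in>Omega. \<forall>y\<in>Omega.
           \<Phi> x \<le> Bfun (holder_semi dI \<theta> p \<beta> f) \<eta> \<beta> (dOm dI \<theta> x y) * \<Phi> y)}"

end

theory Submission
  imports Defs
begin

(* Membership of \<Phi> in \<Delta>_f amounts to: \<Phi> \<ge> 0, the cone condition
   \<Phi>(x) \<le> B(d(x,y)) \<Phi>(y), continuity, and \<nu>0(\<Phi>) = 1.  Write B(z) = exp (c z^\<beta>) with
   c = |f|_\<beta> \<eta>^\<beta>/(1-\<eta>^\<beta>); the identity (c + |f|_\<beta>) \<eta>^\<beta> = c says exactly that a summand
   e^{f(u)} \<Phi>(u), u = \<pi>_k \<zeta>_x, of P_k\<Phi> satisfies the cone condition in x, because the
   inverse branches contract d by the factor \<eta> and f is \<beta>-Hoelder along the projections.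
   So every P_k maps the cone into itself.  Consecutive P_k\<Phi> differ by O((\<theta>^\<beta>)^k), hence
   P\<Phi> = lim P_k\<Phi> exists and inherits the cone condition.  A function in the cone is
   bounded and \<beta>-Hoelder (|\<Phi>(x) - \<Phi>(y)| \<le> (B(d(x,y)) - 1) sup \<Phi>), hence continuous, so
   \<Delta>_f is just the normalised cone.  Finally \<lambda> \<ge> exp(-sup|f|) > 0 and the eigenmeasure
   property gives \<nu>0(P\<Phi>) = \<lambda> \<nu>0(\<Phi>) = \<lambda>, so P\<Phi>/\<lambda> \<in> \<Delta>_f. *)

lemma sum_PiE_insert_indep:
  fixes h :: "('a \<Rightarrow> 'b) \<Rightarrow> real"
  assumes "a \<notin> S" "\<And>c y. h (c(a:=y)) = h c"
  shows "sum h (PiE (insert a S) T) = real (card (T a)) * sum h (PiE S T)"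
proof -
  have "sum h (PiE (insert a S) T) = sum (h \<circ> (\<lambda>(y, g). g(a := y))) (T a \<times> PiE S T)"
    unfolding PiE_insert_eq by (rule sum.reindex[OF inj_combinator[OF assms(1)]])
  also have "\<dots> = (\<Sum>(y,g)\<in>T a \<times> PiE S T. h g)"
    by (rule sum.cong) (auto simp: assms(2))
  also have "\<dots> = (\<Sum>y\<in>T a. \<Sum>g\<in>PiE S T. h g)"
    by (rule sum.cartesian_product[symmetric])
  finally show ?thesis by simp
qed

lemma card_branches: "card (branches b k) = b ^ (2 * k + 1)"
proof -
  have "card (branches b k) = (\<Prod>i\<in>{- int k..int k}. card {..<b})"
    unfolding branches_def by (rule card_PiE) simp
  also have "\<dots> = b ^ card {- int k..int k}" by simp
  also have "card {- int k..int k} = 2 * k + 1" by simp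
  finally show ?thesis .
qed

text \<open>Passing from order \<open>k\<close> to \<open>k+1\<close> adds the two coordinates \<open>\<plusminus>(k+1)\<close>; a quantity
  not depending on them is counted \<open>b\<^sup>2\<close> times.  This lets us compare \<open>P\<^sub>k\<close> and
  \<open>P\<^sub>k\<^sub>+\<^sub>1\<close> as sums over the same index set.\<close>
lemma sum_branches_Suc:
  fixes h :: "(int \<Rightarrow> nat) \<Rightarrow> real"
  assumes "\<And>c a y. \<bar>a\<bar> > int k \<Longrightarrow> h (c(a:=y)) = h c"
  shows "sum h (branches b (Suc k)) = real b ^ 2 * sum h (branches b k)"
proof -
  have split: "{- int (Suc k)..int (Suc k)} = insert (int k + 1) (insert (- int k - 1) {- int k..int k})"
    by auto
  have "sum h (branches b (Suc k))
      = real b * sum h (PiE (insert (- int k - 1) {- int k..int k}) (\<lambda>_. {..<b}))"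
    unfolding branches_def split by (subst sum_PiE_insert_indep) (auto intro: assms)
  also have "sum h (PiE (insert (- int k - 1) {- int k..int k}) (\<lambda>_. {..<b}))
      = real b * sum h (branches b k)"
    unfolding branches_def by (subst sum_PiE_insert_indep) (auto intro: assms)
  finally show ?thesis by (simp add: power2_eq_square)
qed

lemma powr_power_base: "0 \<le> (t::real) \<Longrightarrow> (t ^ n) powr a = (t powr a) ^ n"
  by (induction n) (auto simp: powr_mult)

lemma exp_minus_one_le: "0 \<le> (t::real) \<Longrightarrow> exp t - 1 \<le> t * exp t"
proof -
  assume t: "0 \<le> t"
  have "1 - t \<le> exp (- t)" using exp_ge_add_one_self[of "-t"] by simp
  then have "(1 - t) * exp t \<le> exp (-t) * exp t" by (intro mult_right_mono) auto
  then show ?thesis by (simp add: exp_minus algebra_simps)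
qed

text \<open>Two nonnegative numbers bounded by \<open>G\<close> whose ratio lies in \<open>[1/K, K]\<close> differ by at
  most \<open>(K - 1) G\<close>; this turns the cone condition into a Hoelder estimate.\<close>
lemma diff_le_of_ratio_bound:
  fixes a c K G :: real
  assumes "0 \<le> a" "0 \<le> c" "a \<le> K * c" "c \<le> K * a" "a \<le> G" "c \<le> G" "1 \<le> K"
  shows "\<bar>a - c\<bar> \<le> (K - 1) * G"
proof -
  have "a - c \<le> (K - 1) * c" "c - a \<le> (K - 1) * a" using assms by (simp_all add: algebra_simps)
  moreover have "(K - 1) * c \<le> (K - 1) * G" "(K - 1) * a \<le> (K - 1) * G"
    using assms by (simp_all add: mult_left_mono)
  ultimately show ?thesis by linarith
qed

lemma convergent_if_summable_increments:
  fixes X :: "nat \<Rightarrow> real"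
  assumes "summable (\<lambda>k. X (Suc k) - X k)"
  shows "convergent X"
proof -
  have "(\<lambda>n. \<Sum>i<n. X (Suc i) - X i) \<longlonglongrightarrow> suminf (\<lambda>k. X (Suc k) - X k)"
    using summable_LIMSEQ[OF assms] .
  then have "(\<lambda>n. X n - X 0 + X 0) \<longlonglongrightarrow> suminf (\<lambda>k. X (Suc k) - X k) + X 0"
    by (intro tendsto_add) (auto simp: sum_lessThan_telescope)
  then show ?thesis unfolding convergent_def by auto
qed

locale transfer_setting =
  fixes dI :: "real \<Rightarrow> real \<Rightarrow> real" and \<theta> \<eta> \<beta> p MI F :: real
    and \<zeta> :: "nat \<Rightarrow> real \<Rightarrow> real" and b :: nat and f :: "(int \<Rightarrow> real) \<Rightarrow> real"
  assumes metric: "metric_on_I dI"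
    and MI: "\<forall>s\<in>Iset. \<forall>t\<in>Iset. dI s t \<le> MI"
    and theta: "0 < \<theta>" "\<theta> < 1"
    and eta: "0 < \<eta>" "\<eta> < 1"
    and beta: "0 < \<beta>" "\<beta> \<le> 1"
    and pI: "p \<in> Iset"
    and zI: "\<forall>i<b. \<forall>t\<in>Iset. \<zeta> i t \<in> Iset"
    and contr: "\<forall>i<b. \<forall>s\<in>Iset. \<forall>t\<in>Iset. dI (\<zeta> i s) (\<zeta> i t) \<le> \<eta> * dI s t"
    and bpos: "0 < b"
    and fF: "\<forall>x\<in>Omega. \<bar>f x\<bar> \<le> F"
    and fH: "bdd_above (holder_quots dI \<theta> p \<beta> f)"
begin

abbreviation "D \<equiv> dOm dI \<theta>"
abbreviation "H \<equiv> holder_semi dI \<theta> p \<beta> f"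
abbreviation "B \<equiv> Bfun H \<eta> \<beta>"

lemma dI_nonneg: "s \<in> Iset \<Longrightarrow> t \<in> Iset \<Longrightarrow> 0 \<le> dI s t"
  and dI_sym: "s \<in> Iset \<Longrightarrow> t \<in> Iset \<Longrightarrow> dI s t = dI t s"
  and dI_zero: "s \<in> Iset \<Longrightarrow> t \<in> Iset \<Longrightarrow> dI s t = 0 \<longleftrightarrow> s = t"
  and dI_tri: "s \<in> Iset \<Longrightarrow> t \<in> Iset \<Longrightarrow> u \<in> Iset \<Longrightarrow> dI s u \<le> dI s t + dI t u"
  using metric unfolding metric_on_I_def by blast+

lemma dI_self [simp]: "s \<in> Iset \<Longrightarrow> dI s s = 0"
  using dI_zero by blast

lemma MI_nonneg: "0 \<le> MI"
  using MI pI dI_self by force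

lemma OmegaI: "x \<in> Omega \<Longrightarrow> x i \<in> Iset"
  by (simp add: Omega_def)

subsection \<open>The metric \<open>d\<close> on \<open>\<Omega>\<close>\<close>

text \<open>\<open>d(x,y)\<close> is the supremum of the coordinate terms \<open>\<theta>\<^bsup>|k|\<^esup> d\<^sub>I(x\<^sub>k,y\<^sub>k)\<close>, which are
  uniformly bounded by \<open>MI\<close>; so \<open>d\<close> is a genuine least upper bound, bounded by \<open>MI\<close>.\<close>
lemma coord_term_le_MI:
  assumes "x \<in> Omega" "y \<in> Omega"
  shows "\<theta> ^ nat \<bar>k\<bar> * dI (x k) (y k) \<le> MI"
proof -
  have "\<theta> ^ nat \<bar>k\<bar> \<le> 1" using theta by (simp add: power_le_one)
  moreover have "0 \<le> dI (x k) (y k)" "dI (x k) (y k) \<le> MI"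
    using assms OmegaI dI_nonneg MI by auto
  ultimately show ?thesis using theta
    by (metis mult_left_le_one_le mult_mono' zero_le_power less_imp_le order_trans)
qed

lemma coord_term_le_D:
  assumes "x \<in> Omega" "y \<in> Omega"
  shows "\<theta> ^ nat \<bar>k\<bar> * dI (x k) (y k) \<le> D x y"
proof -
  have "bdd_above (range (\<lambda>k. \<theta> ^ nat \<bar>k\<bar> * dI (x k) (y k)))"
    using coord_term_le_MI[OF assms] by (auto intro!: bdd_aboveI)
  from cSUP_upper[OF _ this] show ?thesis unfolding dOm_def using assms by simp
qed

lemma D_le:
  assumes "x \<in> Omega" "y \<in> Omega" "\<And>k. \<theta> ^ nat \<bar>k\<bar> * dI (x k) (y k) \<le> c"
  shows "D x y \<le> c"
  unfolding dOm_def using assms by (simp add: cSUP_least)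

lemma D_nonneg: "0 \<le> D x y"
proof (cases "x \<in> Omega \<and> y \<in> Omega")
  case True
  then have "0 \<le> \<theta> ^ nat \<bar>0::int\<bar> * dI (x 0) (y 0)" using dI_nonneg OmegaI by simp
  then show ?thesis using coord_term_le_D[of x y 0] True by linarith
qed (auto simp add: dOm_def)

lemma D_le_MI: "D x y \<le> MI"
  using D_le coord_term_le_MI MI_nonneg by (cases "x \<in> Omega \<and> y \<in> Omega") (auto simp: dOm_def)

lemma metric_space: "Metric_space Omega D"
proof
  fix x y show "0 \<le> D x y" by (rule D_nonneg)
  show "D x y = D y x"
    unfolding dOm_def using dI_sym OmegaI by auto
next
  fix x y assume xy: "x \<in> Omega" "y \<in> Omega"
  show "D x y = 0 \<longleftrightarrow> x = y"
  proof
    assume h: "D x y = 0"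
    show "x = y"
    proof
      fix k
      have "\<theta> ^ nat \<bar>k\<bar> * dI (x k) (y k) \<le> 0" using coord_term_le_D[OF xy, of k] h by simp
      moreover have "0 \<le> dI (x k) (y k)" using xy OmegaI dI_nonneg by auto
      ultimately have "dI (x k) (y k) = 0" using theta
        by (metis mult_le_0_iff order_antisym_conv zero_less_power linorder_not_le)
      then show "x k = y k" using xy OmegaI dI_zero by auto
    qed
  next
    assume "x = y"
    then have "D x y \<le> 0" using xy OmegaI by (intro D_le[OF xy]) auto
    then show "D x y = 0" using D_nonneg[of x y] by linarith
  qed
next
  fix x y z assume xyz: "x \<in> Omega" "y \<in> Omega" "z \<in> Omega"
  show "D x z \<le> D x y + D y z"
  proof (rule D_le[OF xyz(1,3)])
    fix k
    have "\<theta> ^ nat \<bar>k\<bar> * dI (x k) (z k) \<le> \<theta> ^ nat \<bar>k\<bar> * (dI (x k) (y k) + dI (y k) (z k))"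
      using dI_tri OmegaI xyz theta by (intro mult_left_mono) auto
    also have "\<dots> \<le> D x y + D y z"
      using coord_term_le_D[OF xyz(1,2), of k] coord_term_le_D[OF xyz(2,3), of k]
      by (simp add: distrib_left)
    finally show "\<theta> ^ nat \<bar>k\<bar> * dI (x k) (z k) \<le> D x y + D y z" .
  qed
qed

sublocale M: Metric_space Omega D
  by (rule metric_space)

lemma proj_proj_le: "k \<le> m \<Longrightarrow> proj p m (proj p k y) = proj p k y"
  by (auto simp: proj_def fun_eq_iff)

lemma branch_mem: "c \<in> branches b k \<Longrightarrow> \<bar>j\<bar> \<le> int k \<Longrightarrow> c j < b"
  unfolding branches_def by (auto dest!: PiE_mem[where x=j])

text \<open>The point \<open>\<pi>\<^sub>k \<zeta>\<^sub>x\<close> at which \<open>P\<^sub>k\<close> samples, for the branch choice \<open>c\<close>.\<close>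
definition preimage_pt :: "nat \<Rightarrow> (int \<Rightarrow> nat) \<Rightarrow> (int \<Rightarrow> real) \<Rightarrow> (int \<Rightarrow> real)" where
  "preimage_pt k c x = proj p k (branch_apply \<zeta> k c x)"

lemma preimage_pt_Omega:
  assumes "x \<in> Omega" "c \<in> branches b k \<or> c \<in> branches b (Suc k)"
  shows "preimage_pt k c x \<in> Omega"
  using assms pI zI branch_mem[of c k] branch_mem[of c "Suc k"]
  by (auto simp: Omega_def preimage_pt_def proj_def branch_apply_def)

lemma proj_preimage_pt: "k \<le> m \<Longrightarrow> proj p m (preimage_pt k c x) = preimage_pt k c x"
  unfolding preimage_pt_def by (rule proj_proj_le)

lemma preimage_pt_upd: "\<bar>a\<bar> > int k \<Longrightarrow> preimage_pt k (c(a:=y)) x = preimage_pt k c x"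
  by (auto simp: preimage_pt_def proj_def branch_apply_def fun_eq_iff)

lemma preimage_pt_contraction:
  assumes xy: "x \<in> Omega" "y \<in> Omega" and c: "c \<in> branches b k"
  shows "D (preimage_pt k c x) (preimage_pt k c y) \<le> \<eta> * D x y"
proof (rule D_le)
  show "preimage_pt k c x \<in> Omega" "preimage_pt k c y \<in> Omega"
    using xy c by (auto intro: preimage_pt_Omega)
  fix j
  show "\<theta> ^ nat \<bar>j\<bar> * dI (preimage_pt k c x j) (preimage_pt k c y j) \<le> \<eta> * D x y"
  proof (cases "\<bar>j\<bar> \<le> int k")
    case True
    then have cj: "c j < b" using branch_mem c by auto
    have "\<theta> ^ nat \<bar>j\<bar> * dI (preimage_pt k c x j) (preimage_pt k c y j)
        = \<theta> ^ nat \<bar>j\<bar> * dI (\<zeta> (c j) (x j)) (\<zeta> (c j) (y j))"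
      using True by (simp add: preimage_pt_def proj_def branch_apply_def)
    also have "\<dots> \<le> \<theta> ^ nat \<bar>j\<bar> * (\<eta> * dI (x j) (y j))"
      using contr cj xy OmegaI theta by (intro mult_left_mono) auto
    also have "\<dots> \<le> \<eta> * D x y"
      using coord_term_le_D[OF xy, of j] eta by (simp add: mult.left_commute mult_left_mono)
    finally show ?thesis .
  next
    case False
    then show ?thesis using pI eta D_nonneg[of x y] by (simp add: preimage_pt_def proj_def)
  qed
qed

text \<open>Refining the order from \<open>k\<close> to \<open>k+1\<close> moves the sample point by at most
  \<open>MI \<theta>\<^sup>k\<^sup>+\<^sup>1\<close>, since only coordinates with \<open>|j| > k\<close> change.\<close>
lemma preimage_pt_refine:
  assumes x: "x \<in> Omega" and c: "c \<in> branches b (Suc k)"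
  shows "D (preimage_pt (Suc k) c x) (preimage_pt k c x) \<le> MI * \<theta> ^ Suc k"
proof (rule D_le)
  show u: "preimage_pt (Suc k) c x \<in> Omega" and v: "preimage_pt k c x \<in> Omega"
    using x c by (auto intro: preimage_pt_Omega)
  fix j
  show "\<theta> ^ nat \<bar>j\<bar> * dI (preimage_pt (Suc k) c x j) (preimage_pt k c x j) \<le> MI * \<theta> ^ Suc k"
  proof (cases "\<bar>j\<bar> \<le> int k")
    case True
    then have "preimage_pt (Suc k) c x j = preimage_pt k c x j"
      by (simp add: preimage_pt_def proj_def branch_apply_def)
    then show ?thesis using v OmegaI MI_nonneg theta by simp
  next
    case False
    have "\<theta> ^ nat \<bar>j\<bar> \<le> \<theta> ^ Suc k" using False theta by (intro power_decreasing) auto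
    moreover have "dI (preimage_pt (Suc k) c x j) (preimage_pt k c x j) \<le> MI"
      "0 \<le> dI (preimage_pt (Suc k) c x j) (preimage_pt k c x j)"
      using MI u v OmegaI dI_nonneg by auto
    ultimately have "\<theta> ^ nat \<bar>j\<bar> * dI (preimage_pt (Suc k) c x j) (preimage_pt k c x j) \<le> \<theta> ^ Suc k * MI"
      using theta by (intro mult_mono) auto
    then show ?thesis by (simp add: mult.commute)
  qed
qed

lemma H_nonneg: "0 \<le> H"
proof -
  let ?x = "\<lambda>_::int. 0::real" and ?y = "\<lambda>_::int. 1/2::real"
  have xy: "?x \<in> Omega" "?y \<in> Omega" "?x \<noteq> ?y" by (auto simp: Omega_def Iset_def fun_eq_iff)
  have "\<bar>f (proj p 0 ?x) - f (proj p 0 ?y)\<bar> / D ?x ?y powr \<beta> \<in> holder_quots dI \<theta> p \<beta> f"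
    unfolding holder_quots_def using xy by blast
  from cSup_upper[OF this fH] show ?thesis unfolding holder_semi_def
    by (smt (verit) divide_nonneg_nonneg powr_ge_zero)
qed

lemma holder_f:
  assumes "x \<in> Omega" "y \<in> Omega" "proj p m x = x" "proj p m y = y"
  shows "\<bar>f x - f y\<bar> \<le> H * D x y powr \<beta>"
proof (cases "x = y")
  case False
  have Dpos: "0 < D x y" using False assms M.nonneg[of x y] M.zero[of x y] by linarith
  have "\<bar>f (proj p m x) - f (proj p m y)\<bar> / D x y powr \<beta> \<in> holder_quots dI \<theta> p \<beta> f"
    unfolding holder_quots_def using assms False by blast
  then have "\<bar>f x - f y\<bar> / D x y powr \<beta> \<le> H"
    unfolding holder_semi_def using assms(3,4) cSup_upper[OF _ fH] by simp
  then show ?thesis using Dpos by (simp add: divide_le_eq)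
qed (use H_nonneg in simp)

subsection \<open>The cone and its invariance under \<open>P\<^sub>k\<close>\<close>

definition cB where "cB = H * (\<eta> powr \<beta> / (1 - \<eta> powr \<beta>))"

lemma eta_powr: "0 < \<eta> powr \<beta>" "\<eta> powr \<beta> < 1"
  using eta beta powr_less_mono2[of \<beta> \<eta> 1] by auto

lemma cB_nonneg: "0 \<le> cB"
  unfolding cB_def using H_nonneg eta_powr by simp

text \<open>The defining identity of \<open>cB\<close>: the loss \<open>H\<close> from the potential is exactly
  compensated by the contraction \<open>\<eta>\<^sup>\<beta>\<close>.\<close>
lemma cB_identity: "(cB + H) * \<eta> powr \<beta> = cB"
  unfolding cB_def using eta_powr by (simp add: field_simps)

lemma B_eq: "B z = exp (cB * z powr \<beta>)"
  by (simp add: Bfun_def cB_def)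

lemma B_ge1: "1 \<le> B z"
  unfolding B_eq using cB_nonneg by simp

lemma B_mono: "0 \<le> z \<Longrightarrow> z \<le> w \<Longrightarrow> B z \<le> B w"
  unfolding B_eq using cB_nonneg beta by (auto intro!: mult_left_mono powr_mono2)

lemma B_minus_one:
  assumes "0 \<le> z" "z \<le> MI"
  shows "B z - 1 \<le> cB * exp (cB * MI powr \<beta>) * z powr \<beta>"
proof -
  have t0: "0 \<le> cB * z powr \<beta>" using cB_nonneg by simp
  have "B z - 1 \<le> cB * z powr \<beta> * exp (cB * z powr \<beta>)"
    unfolding B_eq by (rule exp_minus_one_le[OF t0])
  also have "\<dots> \<le> cB * z powr \<beta> * exp (cB * MI powr \<beta>)"
    using assms cB_nonneg beta t0 by (intro mult_left_mono) (auto intro!: mult_left_mono powr_mono2)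
  finally show ?thesis by (simp add: algebra_simps)
qed

definition cone :: "((int \<Rightarrow> real) \<Rightarrow> real) \<Rightarrow> bool" where
  "cone \<Phi> \<longleftrightarrow> (\<forall>u\<in>Omega. 0 \<le> \<Phi> u) \<and> (\<forall>u\<in>Omega. \<forall>v\<in>Omega. \<Phi> u \<le> B (D u v) * \<Phi> v)"

lemma cone_one: "cone (\<lambda>_. 1)"
  unfolding cone_def using B_ge1 by simp

lemma cone_divide: "cone \<Phi> \<Longrightarrow> 0 \<le> c \<Longrightarrow> cone (\<lambda>u. \<Phi> u / c)"
  unfolding cone_def by (auto simp: divide_right_mono)

text \<open>Cone functions are bounded, since \<open>d\<close> is bounded by \<open>MI\<close>.\<close>
lemma cone_bounded:
  assumes "cone \<Phi>"
  obtains C where "\<forall>u\<in>Omega. \<Phi> u \<le> C"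
proof
  let ?y = "\<lambda>_::int. 0::real"
  have y: "?y \<in> Omega" unfolding Omega_def Iset_def by auto
  show "\<forall>u\<in>Omega. \<Phi> u \<le> B MI * \<Phi> ?y"
  proof
    fix u assume u: "u \<in> Omega"
    have "\<Phi> u \<le> B (D u ?y) * \<Phi> ?y" using assms u y unfolding cone_def by auto
    also have "\<dots> \<le> B MI * \<Phi> ?y"
      using assms y B_mono[OF D_nonneg D_le_MI] unfolding cone_def by (intro mult_right_mono) auto
    finally show "\<Phi> u \<le> B MI * \<Phi> ?y" .
  qed
qed

definition weighted :: "((int \<Rightarrow> real) \<Rightarrow> real) \<Rightarrow> (int \<Rightarrow> real) \<Rightarrow> real" where
  "weighted \<Phi> u = exp (f u) * \<Phi> u"

lemma Pk_weighted:
  "Pk \<zeta> b p f k \<Phi> x = (1 / real b ^ (2 * k + 1)) * (\<Sum>c\<in>branches b k. weighted \<Phi> (preimage_pt k c x))"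
  by (simp add: Pk_def weighted_def preimage_pt_def)

lemma weighted_bounds:
  assumes "u \<in> Omega" "cone \<Phi>" "\<forall>u\<in>Omega. \<Phi> u \<le> C"
  shows "0 \<le> weighted \<Phi> u" "weighted \<Phi> u \<le> exp F * C"
proof -
  have "0 \<le> \<Phi> u" "\<Phi> u \<le> C" using assms unfolding cone_def by auto
  moreover have "exp (f u) \<le> exp F" using fF assms(1) by auto
  ultimately show "0 \<le> weighted \<Phi> u" "weighted \<Phi> u \<le> exp F * C"
    unfolding weighted_def by (auto intro: mult_mono)
qed

text \<open>Between points fixed by some \<open>\<pi>\<^sub>m\<close>, the summand satisfies a cone condition with
  the larger exponent \<open>cB + H\<close>: the potential costs the factor \<open>exp (H d\<^sup>\<beta>)\<close>.\<close>
lemma weighted_cone_ineq: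
  assumes uv: "u \<in> Omega" "v \<in> Omega" "proj p m u = u" "proj p m v = v" and \<Phi>: "cone \<Phi>"
  shows "weighted \<Phi> u \<le> exp ((cB + H) * D u v powr \<beta>) * weighted \<Phi> v"
proof -
  have "0 \<le> \<Phi> u" "0 \<le> \<Phi> v" and \<Phi>_uv: "\<Phi> u \<le> exp (cB * D u v powr \<beta>) * \<Phi> v"
    using \<Phi> uv unfolding cone_def B_eq by auto
  moreover have "f u \<le> f v + H * D u v powr \<beta>" using holder_f[OF uv] by simp
  ultimately have "exp (f u) * \<Phi> u \<le> exp (f v + H * D u v powr \<beta>) * (exp (cB * D u v powr \<beta>) * \<Phi> v)"
    by (intro mult_mono) auto
  then show ?thesis unfolding weighted_def by (simp add: exp_add algebra_simps)
qed

text \<open>Composing with the contraction of the inverse branches and using \<open>cB_identity\<close>,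
  each summand of \<open>P\<^sub>k\<Phi>\<close> satisfies the cone condition with the original constant.\<close>
lemma weighted_preimage_cone_ineq:
  assumes xy: "x \<in> Omega" "y \<in> Omega" and c: "c \<in> branches b k" and \<Phi>: "cone \<Phi>"
  shows "weighted \<Phi> (preimage_pt k c x) \<le> B (D x y) * weighted \<Phi> (preimage_pt k c y)"
proof -
  let ?u = "preimage_pt k c x" and ?v = "preimage_pt k c y"
  have uv: "?u \<in> Omega" "?v \<in> Omega" using xy c by (auto intro: preimage_pt_Omega)
  have "(cB + H) * D ?u ?v powr \<beta> \<le> (cB + H) * (\<eta> * D x y) powr \<beta>"
    using preimage_pt_contraction[OF xy c] cB_nonneg H_nonneg D_nonneg beta
    by (intro mult_left_mono powr_mono2) auto
  also have "\<dots> = (cB + H) * \<eta> powr \<beta> * D x y powr \<beta>"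
    using eta D_nonneg by (simp add: powr_mult)
  also have "\<dots> = cB * D x y powr \<beta>"
    by (simp only: cB_identity)
  finally have "exp ((cB + H) * D ?u ?v powr \<beta>) \<le> B (D x y)" unfolding B_eq by simp
  moreover have "0 \<le> weighted \<Phi> ?v"
    using uv \<Phi> unfolding weighted_def cone_def by simp
  ultimately show ?thesis
    using weighted_cone_ineq[OF uv proj_preimage_pt[OF order_refl] proj_preimage_pt[OF order_refl] \<Phi>]
    by (meson mult_right_mono order_trans)
qed

lemma Pk_cone_ineq:
  assumes xy: "x \<in> Omega" "y \<in> Omega" and \<Phi>: "cone \<Phi>"
  shows "Pk \<zeta> b p f k \<Phi> x \<le> B (D x y) * Pk \<zeta> b p f k \<Phi> y"
proof -
  have "(\<Sum>c\<in>branches b k. weighted \<Phi> (preimage_pt k c x))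
      \<le> B (D x y) * (\<Sum>c\<in>branches b k. weighted \<Phi> (preimage_pt k c y))"
    unfolding sum_distrib_left by (intro sum_mono weighted_preimage_cone_ineq[OF xy _ \<Phi>])
  then show ?thesis unfolding Pk_weighted
    by (simp add: mult.left_commute[of "B (D x y)"] divide_right_mono)
qed

subsection \<open>Convergence of \<open>P\<^sub>k\<Phi>\<close>\<close>

definition weighted_lip :: "real \<Rightarrow> real" where
  "weighted_lip C = exp F * C * (cB + H) * exp ((cB + H) * MI powr \<beta>)"

lemma weighted_holder:
  assumes uv: "u \<in> Omega" "v \<in> Omega" "proj p m u = u" "proj p m v = v"
    and \<Phi>: "cone \<Phi>" and C: "\<forall>u\<in>Omega. \<Phi> u \<le> C"
  shows "\<bar>weighted \<Phi> u - weighted \<Phi> v\<bar> \<le> weighted_lip C * D u v powr \<beta>"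
proof -
  define t where "t = (cB + H) * D u v powr \<beta>"
  have cH: "0 \<le> cB + H" using cB_nonneg H_nonneg by simp
  have t0: "0 \<le> t" unfolding t_def using cH by simp
  have t_le: "t \<le> (cB + H) * MI powr \<beta>"
    unfolding t_def using cH D_le_MI D_nonneg beta by (intro mult_left_mono powr_mono2) auto
  have bd: "0 \<le> weighted \<Phi> u" "weighted \<Phi> u \<le> exp F * C" "0 \<le> weighted \<Phi> v" "weighted \<Phi> v \<le> exp F * C"
    using weighted_bounds[OF uv(1) \<Phi> C] weighted_bounds[OF uv(2) \<Phi> C] by auto
  have "weighted \<Phi> u \<le> exp t * weighted \<Phi> v" "weighted \<Phi> v \<le> exp t * weighted \<Phi> u"
    unfolding t_def using weighted_cone_ineq[OF uv \<Phi>] weighted_cone_ineq[OF uv(2,1,4,3) \<Phi>]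
    by (simp_all add: M.commute)
  then have "\<bar>weighted \<Phi> u - weighted \<Phi> v\<bar> \<le> (exp t - 1) * (exp F * C)"
    using bd t0 by (intro diff_le_of_ratio_bound) auto
  also have "\<dots> \<le> (t * exp ((cB + H) * MI powr \<beta>)) * (exp F * C)"
    using exp_minus_one_le[OF t0] t_le t0 bd
    by (intro mult_right_mono) (auto intro: order_trans mult_left_mono)
  finally show ?thesis unfolding t_def weighted_lip_def by (simp add: algebra_simps)
qed

lemma Pk_weighted_Suc:
  "Pk \<zeta> b p f k \<Phi> x
     = (1 / real b ^ (2 * Suc k + 1)) * (\<Sum>c\<in>branches b (Suc k). weighted \<Phi> (preimage_pt k c x))"
proof -
  have "(\<Sum>c\<in>branches b (Suc k). weighted \<Phi> (preimage_pt k c x))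
      = real b ^ 2 * (\<Sum>c\<in>branches b k. weighted \<Phi> (preimage_pt k c x))"
    by (rule sum_branches_Suc) (simp add: preimage_pt_upd)
  moreover have "real b ^ (2 * Suc k + 1) = real b ^ 2 * real b ^ (2 * k + 1)"
    by (simp add: power_add[symmetric])
  ultimately show ?thesis using bpos by (simp add: Pk_weighted power2_eq_square field_simps)
qed

lemma Pk_increment:
  assumes x: "x \<in> Omega" and \<Phi>: "cone \<Phi>" and C: "\<forall>u\<in>Omega. \<Phi> u \<le> C"
  shows "\<bar>Pk \<zeta> b p f (Suc k) \<Phi> x - Pk \<zeta> b p f k \<Phi> x\<bar>
           \<le> weighted_lip C * MI powr \<beta> * (\<theta> powr \<beta>) ^ Suc k"
proof -
  define N where "N = real b ^ (2 * Suc k + 1)"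
  define E where "E = weighted_lip C * MI powr \<beta> * (\<theta> powr \<beta>) ^ Suc k"
  have N: "0 < N" "real (card (branches b (Suc k))) = N"
    unfolding N_def card_branches using bpos by auto
  have "0 \<le> C" using C \<Phi> x unfolding cone_def by force
  then have lip: "0 \<le> weighted_lip C"
    unfolding weighted_lip_def using cB_nonneg H_nonneg by simp
  have E: "\<bar>weighted \<Phi> (preimage_pt (Suc k) c x) - weighted \<Phi> (preimage_pt k c x)\<bar> \<le> E"
    if c: "c \<in> branches b (Suc k)" for c
  proof -
    let ?u = "preimage_pt (Suc k) c x" and ?v = "preimage_pt k c x"
    have "D ?u ?v powr \<beta> \<le> (MI * \<theta> ^ Suc k) powr \<beta>"
      using preimage_pt_refine[OF x c] D_nonneg beta by (intro powr_mono2) auto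
    also have "\<dots> = MI powr \<beta> * (\<theta> powr \<beta>) ^ Suc k"
      using MI_nonneg theta by (simp add: powr_mult powr_power_base)
    finally have "D ?u ?v powr \<beta> \<le> MI powr \<beta> * (\<theta> powr \<beta>) ^ Suc k" .
    from mult_left_mono[OF this lip] have "weighted_lip C * D ?u ?v powr \<beta> \<le> E"
      unfolding E_def by (simp add: mult.assoc)
    moreover have "\<bar>weighted \<Phi> ?u - weighted \<Phi> ?v\<bar> \<le> weighted_lip C * D ?u ?v powr \<beta>"
      using x c \<Phi> C by (intro weighted_holder[where m="Suc k"] proj_preimage_pt preimage_pt_Omega) auto
    ultimately show ?thesis by linarith
  qed
  have "\<bar>Pk \<zeta> b p f (Suc k) \<Phi> x - Pk \<zeta> b p f k \<Phi> x\<bar>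
      = \<bar>\<Sum>c\<in>branches b (Suc k). weighted \<Phi> (preimage_pt (Suc k) c x) - weighted \<Phi> (preimage_pt k c x)\<bar> / N"
    unfolding Pk_weighted[of "Suc k"] Pk_weighted_Suc[of k] N_def[symmetric] sum_subtractf
    using N(1) by (simp add: diff_divide_distrib[symmetric])
  also have "\<dots> \<le> (\<Sum>c\<in>branches b (Suc k). E) / N"
    using N(1) E by (intro divide_right_mono order_trans[OF sum_abs sum_mono]) auto
  also have "\<dots> = E" using N by simp
  finally show ?thesis unfolding E_def .
qed

lemma Pk_convergent:
  assumes "x \<in> Omega" "cone \<Phi>" "\<forall>u\<in>Omega. \<Phi> u \<le> C"
  shows "convergent (\<lambda>k. Pk \<zeta> b p f k \<Phi> x)"
proof (rule convergent_if_summable_increments, rule summable_comparison_test)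
  have "0 < \<theta> powr \<beta>" "\<theta> powr \<beta> < 1"
    using theta beta powr_less_mono2[of \<beta> \<theta> 1] by auto
  then have "summable (\<lambda>k. (weighted_lip C * MI powr \<beta> * \<theta> powr \<beta>) * (\<theta> powr \<beta>) ^ k)"
    by (intro summable_mult summable_geometric) simp
  then show "summable (\<lambda>k. weighted_lip C * MI powr \<beta> * (\<theta> powr \<beta>) ^ Suc k)"
    by (simp add: mult.assoc)
  show "\<exists>N. \<forall>n\<ge>N. norm (Pk \<zeta> b p f (Suc n) \<Phi> x - Pk \<zeta> b p f n \<Phi> x)
                     \<le> weighted_lip C * MI powr \<beta> * (\<theta> powr \<beta>) ^ Suc n"
    using Pk_increment[OF assms] by auto
qed

lemma Pk_bounds:
  assumes x: "x \<in> Omega" and \<Phi>: "cone \<Phi>" and C: "\<forall>u\<in>Omega. \<Phi> u \<le> C"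
  shows "0 \<le> Pk \<zeta> b p f k \<Phi> x" "Pk \<zeta> b p f k \<Phi> x \<le> exp F * C"
proof -
  define N where "N = real b ^ (2 * k + 1)"
  have N: "0 < N" "card (branches b k) = N" unfolding N_def using bpos by (auto simp: card_branches)
  have w: "0 \<le> weighted \<Phi> (preimage_pt k c x)" "weighted \<Phi> (preimage_pt k c x) \<le> exp F * C"
    if "c \<in> branches b k" for c
    using weighted_bounds[OF preimage_pt_Omega \<Phi> C] x that by auto
  have "(\<Sum>c\<in>branches b k. weighted \<Phi> (preimage_pt k c x)) \<le> N * (exp F * C)"
    using sum_mono[of "branches b k" _ "\<lambda>_. exp F * C", OF w(2)] N by simp
  then show "Pk \<zeta> b p f k \<Phi> x \<le> exp F * C"
    unfolding Pk_weighted N_def[symmetric] using N by (simp add: field_simps)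
  show "0 \<le> Pk \<zeta> b p f k \<Phi> x"
    unfolding Pk_weighted using w(1) by (simp add: sum_nonneg)
qed

lemma Pk_one_lower:
  assumes x: "x \<in> Omega"
  shows "exp (- F) \<le> Pk \<zeta> b p f k (\<lambda>_. 1) x"
proof -
  define N where "N = real b ^ (2 * k + 1)"
  have N: "0 < N" "card (branches b k) = N" unfolding N_def using bpos by (auto simp: card_branches)
  have "exp (- F) \<le> weighted (\<lambda>_. 1) (preimage_pt k c x)" if "c \<in> branches b k" for c
    using fF preimage_pt_Omega[OF x] that unfolding weighted_def by (fastforce simp: abs_le_iff)
  then have "N * exp (- F) \<le> (\<Sum>c\<in>branches b k. weighted (\<lambda>_. 1) (preimage_pt k c x))"
    using sum_mono[of "branches b k" "\<lambda>_. exp (- F)"] N by simp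
  then show ?thesis unfolding Pk_weighted N_def[symmetric] using N by (simp add: field_simps)
qed

lemma Pop_lim:
  assumes "x \<in> Omega" "cone \<Phi>" "\<forall>u\<in>Omega. \<Phi> u \<le> C"
  shows "(\<lambda>k. Pk \<zeta> b p f k \<Phi> x) \<longlonglongrightarrow> Pop \<zeta> b p f \<Phi> x"
  unfolding Pop_def using Pk_convergent[OF assms] by (simp add: convergent_LIMSEQ_iff)

lemma Pop_one_lower: "x \<in> Omega \<Longrightarrow> exp (- F) \<le> Pop \<zeta> b p f (\<lambda>_. 1) x"
  using LIMSEQ_le_const[OF Pop_lim[OF _ cone_one, of x 1]] Pk_one_lower by auto

lemma Pop_cone:
  assumes \<Phi>: "cone \<Phi>"
  shows "cone (Pop \<zeta> b p f \<Phi>)"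
proof -
  obtain C where C: "\<forall>u\<in>Omega. \<Phi> u \<le> C" using cone_bounded[OF \<Phi>] .
  have "0 \<le> Pop \<zeta> b p f \<Phi> x" if "x \<in> Omega" for x
    using LIMSEQ_le_const[OF Pop_lim[OF that \<Phi> C]] Pk_bounds[OF that \<Phi> C] by auto
  moreover have "Pop \<zeta> b p f \<Phi> x \<le> B (D x y) * Pop \<zeta> b p f \<Phi> y"
    if "x \<in> Omega" "y \<in> Omega" for x y
    by (rule LIMSEQ_le[OF Pop_lim[OF that(1) \<Phi> C] tendsto_mult_left[OF Pop_lim[OF that(2) \<Phi> C]]])
      (use Pk_cone_ineq[OF that \<Phi>] in auto)
  ultimately show ?thesis unfolding cone_def by blast
qed

lemma Pop_one_integral_pos:
  assumes "prob_space M" "space M = Omega" "integrable M (Pop \<zeta> b p f (\<lambda>_. 1))"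
  shows "0 < integral\<^sup>L M (Pop \<zeta> b p f (\<lambda>_. 1))"
proof -
  interpret prob_space M by (rule assms(1))
  have "exp (- F) = integral\<^sup>L M (\<lambda>_. exp (- F))"
    using prob_space by simp
  also have "\<dots> \<le> integral\<^sup>L M (Pop \<zeta> b p f (\<lambda>_. 1))"
    using assms Pop_one_lower by (intro integral_mono) auto
  finally show ?thesis by (meson exp_gt_zero less_le_trans)
qed

subsection \<open>Regularity of cone functions\<close>

lemma cone_holder:
  assumes \<Phi>: "cone \<Phi>" and C: "\<forall>u\<in>Omega. \<Phi> u \<le> C" and xy: "x \<in> Omega" "y \<in> Omega"
  shows "\<bar>\<Phi> x - \<Phi> y\<bar> \<le> (cB * exp (cB * MI powr \<beta>) * C) * D x y powr \<beta>"
proof -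
  have "\<Phi> x \<le> B (D x y) * \<Phi> y" "\<Phi> y \<le> B (D x y) * \<Phi> x" "0 \<le> \<Phi> x" "0 \<le> \<Phi> y"
    using \<Phi> xy M.commute[of x y] unfolding cone_def by metis+
  then have "\<bar>\<Phi> x - \<Phi> y\<bar> \<le> (B (D x y) - 1) * C"
    using C xy B_ge1 by (intro diff_le_of_ratio_bound) auto
  also have "\<dots> \<le> (cB * exp (cB * MI powr \<beta>) * D x y powr \<beta>) * C"
    using B_minus_one[OF D_nonneg D_le_MI] C \<open>0 \<le> \<Phi> x\<close> xy by (intro mult_right_mono) force+
  finally show ?thesis by (simp add: algebra_simps)
qed

lemma holder_continuous:
  assumes K: "0 \<le> K" and hold: "\<And>x y. x \<in> Omega \<Longrightarrow> y \<in> Omega \<Longrightarrow> \<bar>R x - R y\<bar> \<le> K * D x y powr \<beta>"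
  shows "R \<in> Ccont dI \<theta>"
proof -
  have "continuous_map M.mtopology (Metric_space.mtopology UNIV dist) R"
  proof (subst M.metric_continuous_map[OF Met_TC.Metric_space_axioms], intro conjI ballI allI impI)
    fix a and \<epsilon> :: real assume a: "a \<in> Omega" and e: "0 < \<epsilon>"
    define \<delta> where "\<delta> = (\<epsilon> / (K + 1)) powr (1 / \<beta>)"
    have eK: "0 < \<epsilon> / (K + 1)" using e K by simp
    have "0 < \<delta>" unfolding \<delta>_def using eK by (simp only: powr_gt_zero)
    moreover have "\<delta> powr \<beta> = \<epsilon> / (K + 1)" unfolding \<delta>_def using eK e K beta by (simp add: powr_powr)
    moreover have "dist (R a) (R x) < \<epsilon>" if x: "x \<in> Omega" "D a x < \<delta>" for x
    proof -
      have "D a x powr \<beta> \<le> \<delta> powr \<beta>" using x D_nonneg beta by (intro powr_mono2) auto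
      then have "K * D a x powr \<beta> \<le> K * (\<epsilon> / (K + 1))"
        using K \<open>\<delta> powr \<beta> = \<epsilon> / (K + 1)\<close> by (intro mult_left_mono) auto
      also have "\<dots> < \<epsilon>" using K e by (simp add: field_simps)
      finally show ?thesis using hold[OF a x(1)] by (simp add: dist_real_def)
    qed
    ultimately show "\<exists>\<delta>>0. \<forall>x. x \<in> Omega \<and> D a x < \<delta> \<longrightarrow> dist (R a) (R x) < \<epsilon>" by blast
  qed simp
  then show ?thesis unfolding Ccont_def Otop_def by simp
qed

lemma cone_continuous: "cone \<Phi> \<Longrightarrow> \<Phi> \<in> Ccont dI \<theta>"
proof -
  assume \<Phi>: "cone \<Phi>"
  obtain C where C: "\<forall>u\<in>Omega. \<Phi> u \<le> C" using cone_bounded[OF \<Phi>] .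
  have "0 \<le> C" using C \<Phi> unfolding cone_def Omega_def Iset_def by force
  then show ?thesis
    using cB_nonneg by (intro holder_continuous[OF _ cone_holder[OF \<Phi> C]]) auto
qed

lemma Delta_f_iff: "\<Phi> \<in> Delta_f dI \<theta> p \<beta> \<eta> f \<nu> \<longleftrightarrow> cone \<Phi> \<and> integral\<^sup>L \<nu> \<Phi> = 1"
  unfolding Delta_f_def cone_def using cone_continuous[unfolded cone_def] by blast

end

theorem mainTheorem4:
  fixes dI :: "real \<Rightarrow> real \<Rightarrow> real"
    and \<theta> \<eta> \<beta> p :: real
    and \<tau> :: "real \<Rightarrow> real"
    and \<zeta> :: "nat \<Rightarrow> real \<Rightarrow> real"
    and b :: nat
    and f :: "(int \<Rightarrow> real) \<Rightarrow> real"
    and \<nu>0 :: "(int \<Rightarrow> real) measure"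
    and \<Phi> :: "(int \<Rightarrow> real) \<Rightarrow> real"
  assumes dI_metric: "metric_on_I dI"
    and dI_bounded: "\<exists>M. \<forall>s\<in>Iset. \<forall>t\<in>Iset. dI s t \<le> M"
    and theta: "0 < \<theta>" "\<theta> < 1"
    and tau_maps: "\<forall>t\<in>Iset. \<tau> t \<in> Iset"
    and branches_in: "\<forall>i<b. \<forall>t\<in>Iset. \<zeta> i t \<in> Iset \<and> \<tau> (\<zeta> i t) = t"
    and full_branches: "\<forall>t\<in>Iset. {s \<in> Iset. \<tau> s = t} = (\<lambda>i. \<zeta> i t) ` {..<b}
                                   \<and> inj_on (\<lambda>i. \<zeta> i t) {..<b}"
    and fixed_pt: "p \<in> Iset" "\<tau> p = p"
    and eta: "0 < \<eta>" "\<eta> < 1"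
    and contraction: "\<forall>i<b. \<forall>s\<in>Iset. \<forall>t\<in>Iset. dI (\<zeta> i s) (\<zeta> i t) \<le> \<eta> * dI s t"
    and beta: "0 < \<beta>" "\<beta> \<le> 1"
    and f_in: "f \<in> Cbeta dI \<theta> p \<beta>"
    and nu_prob: "prob_space \<nu>0"
    and nu_space: "space \<nu>0 = Omega"
    and nu_borel: "sets \<nu>0 = sigma_sets Omega {U. openin (Otop dI \<theta>) U}"
    and nu_eigen: "\<forall>\<Psi>\<in>Ccont dI \<theta>. (\<exists>M. \<forall>x\<in>Omega. \<bar>\<Psi> x\<bar> \<le> M) \<longrightarrow>
                     integrable \<nu>0 (Pop \<zeta> b p f \<Psi>) \<and>
                     integral\<^sup>L \<nu>0 (Pop \<zeta> b p f \<Psi>)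
                       = integral\<^sup>L \<nu>0 (Pop \<zeta> b p f (\<lambda>_. 1)) * integral\<^sup>L \<nu>0 \<Psi>"
    and Phi_in: "\<Phi> \<in> Delta_f dI \<theta> p \<beta> \<eta> f \<nu>0"
  shows "(\<lambda>x. Pop \<zeta> b p f \<Phi> x / integral\<^sup>L \<nu>0 (Pop \<zeta> b p f (\<lambda>_. 1)))
           \<in> Delta_f dI \<theta> p \<beta> \<eta> f \<nu>0"
proof -
  obtain MI where MI: "\<forall>s\<in>Iset. \<forall>t\<in>Iset. dI s t \<le> MI" using dI_bounded by blast
  obtain F where fF: "\<forall>x\<in>Omega. \<bar>f x\<bar> \<le> F" and fH: "bdd_above (holder_quots dI \<theta> p \<beta> f)"
    using f_in unfolding Cbeta_def by blast
  have "p \<in> (\<lambda>i. \<zeta> i p) ` {..<b}" using full_branches fixed_pt by blast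
  then have "0 < b" by auto \<comment> \<open>the fixed point has a preimage, so there is a branch\<close>
  then interpret transfer_setting dI \<theta> \<eta> \<beta> p MI F \<zeta> b f
    using dI_metric MI theta eta beta fixed_pt branches_in contraction fF fH
    by unfold_locales auto
  define lam where "lam = integral\<^sup>L \<nu>0 (Pop \<zeta> b p f (\<lambda>_. 1))"
  have \<Phi>: "cone \<Phi>" "integral\<^sup>L \<nu>0 \<Phi> = 1" using Phi_in by (simp_all add: Delta_f_iff)
  have "0 < lam"
    unfolding lam_def using nu_eigen cone_continuous[OF cone_one] nu_prob nu_space
    by (intro Pop_one_integral_pos) auto
  moreover obtain C where "\<forall>x\<in>Omega. \<Phi> x \<le> C" using cone_bounded[OF \<Phi>(1)] .
  then have "\<exists>M. \<forall>x\<in>Omega. \<bar>\<Phi> x\<bar> \<le> M" using \<Phi>(1) unfolding cone_def by auto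
  then have "integral\<^sup>L \<nu>0 (Pop \<zeta> b p f \<Phi>) = lam"
    using nu_eigen cone_continuous[OF \<Phi>(1)] \<Phi>(2) unfolding lam_def by (metis mult.right_neutral)
  ultimately show ?thesis
    unfolding lam_def[symmetric] Delta_f_iff
    using cone_divide[OF Pop_cone[OF \<Phi>(1)]] by simp
qed

end
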